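(* Let $M_I$ be a prefactor system and $M$ a target for it, and let $M_{\bar I}$ be the resulting compactification (a prefactor system on $\bar I=I\cup\{top\}$). (1) If $M_I$ is stable and $M$ is maximal over $M_I$, then $M_{\bar I}$ is stable. (2) If $M_I$ is direct and $M$ is extensional over $M_I$, then $M_{\bar I}$ is direct, and for every $a\in M$ the set $I_a$ contains a non-empty upward closed subset of $I$. (3) If $M_I$ is inverse and $M$ is maximal over $M_I$, then $M_{\bar I}$ is inverse, and $I_a=I$ for every $a\in M$.
   Context: Let $(I,\le)$ be a non-empty directed preordered set and $\mathcal F(I)$ a family of subsets of $I$, each cofinal in $I$, closed under supersets and finite intersections, and containing all non-empty upward closed subsets. A system $(M_I,\triangleright)$: sets $M_i$ ($i\in I$, pairwise disjoint) with relations $\triangleright\subseteq M_{i'}\times M_i$ for $i\le i'$, reflexive for $i=i'$. $a_i\approx b_j$ iff some $c\in M_{i'}$, $i'\ge i,j$, has $c\triangleright a_i$ and $c\triangleright b_j$. Prefactor system: $a_{i'}\approx a_i\iff a_{i'}\triangleright a_i$ for $i\le i'$. Stable: $a_{i'}\triangleright a_i\approx b_i$ implies $a_{i'}\triangleright b_i$. $\approx$-embeddings: $\approx$-preserving maps $emb_{i,i'}:M_i\to M_{i'}$ with $emb_{i,i}(a)\approx a$, $emb_{i',i''}(emb_{i,i'}(a))\approx emb_{i,i''}(a)$; coherent if $a_{i'}\triangleright a_i\Rightarrow emb_{i',i''}(a_{i'})\triangleright a_i$ ($i\le i'\le i''$). $\approx$-projections: $\approx$-preserving maps $proj_{i',i}:M_{i'}\to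 M_i$ with $proj_{i,i}(a)\approx a$, $proj_{i',i}(proj_{i'',i'}(a))\approx proj_{i'',i}(a)$; coherent if $a_{i''}\triangleright a_i\Rightarrow proj_{i'',i'}(a_{i''})\triangleright a_i$. Direct: prefactor system with coherent $\approx$-embeddings such that $a_{i'}\triangleright a_i\iff a_{i'}\approx emb_{i,i'}(a_i)$. Inverse: prefactor system with coherent $\approx$-projections such that $a_{i'}\triangleright a_i\iff proj_{i',i}(a_{i'})\approx a_i$ (these notions make sense for any index set, in particular for $\bar I$). Target and compactification: a target for $M_I$ is a set $M$ with a relation $a\triangleright a_i$ between $a\in M$ and elements $a_i\in M_i$, such that $I_a:=\{i\in I\mid\exists a_i\in M_i,\ a\triangleright a_i\}\in\mathcal F(I)$ for all $a\in M$, and such that the compactification $M_{\bar I}$ — index set $\bar I=I\cup\{top\}$ with $top$ a new greatest element, $M_{top}=M$, the relation $\triangleright$ on $M\times M$ being equality — is again a prefactor system, i.e. $a\triangleright a_{i'}$ and $a\triangleright a_i$ imply $a_{i'}\triangleright a_i$ ($i\le i'$). If $M_I$ carries embeddings (resp. projections), the target additionally carries maps $Emb_i=emb_{i,top}:M_i\to M$ (resp. $Proj_i=proj_{top,i}:M\to M_i$) making $M_{\bar I}$ a prefactor system with coherent $\approx$-embeddings (resp. projections) extending those of $M_I$; in particular $Emb_{i'}(emb_{i,i'}(a_i))=Emb_i(a_i)$ and $a_{i'}\triangleright a_i\Rightarrow Emb_{i'}(a_{i'})\triangleright a_i$, resp. $proj_{i',i}(Proj_{i'}(a))\approx Proj_i(a)$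 and $a\triangleright a_i\Rightarrow Proj_{i'}(a)\triangleright a_i$ ($i\le i'$); here $Proj_i(a)$ may be taken as $proj_{i',i}(a_{i'})$ for any $i'\ge i$ with $a\triangleright a_{i'}$. A consistent set is $\alpha\subseteq\bigcup_iM_i$ with $a_{i'}\triangleright a_i$ for all its elements $a_{i'}\in M_{i'}$, $a_i\in M_i$, $i'\ge i$, and $\{i\mid\alpha\cap M_i\ne\emptyset\}\in\mathcal F(I)$. For $a\in M$, $Ext(a):=\{a_i\in\bigcup_iM_i\mid a\triangleright a_i\}$ (a consistent set). Two consistent sets $\alpha,\beta$ satisfy $\alpha\sim\beta$ iff $a_i\approx b_j$ for all $a_i\in\alpha$, $b_j\in\beta$. $M$ is maximal over $M_I$ iff $Ext(a)$ is an inclusion-maximal consistent set for every $a\in M$; $M$ is extensional over $M_I$ iff $Ext(a)\sim Ext(b)$ implies $a=b$. *)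

theory Defs
  imports Main
begin

text \<open>The index set I is the whole type 'i, preordered by le.\<close>

definition upclosed :: "('i \<Rightarrow> 'i \<Rightarrow> bool) \<Rightarrow> 'i set \<Rightarrow> bool" where
  "upclosed le S \<longleftrightarrow> (\<forall>i j. i \<in> S \<longrightarrow> le i j \<longrightarrow> j \<in> S)"

definition index_family :: "('i \<Rightarrow> 'i \<Rightarrow> bool) \<Rightarrow> 'i set set \<Rightarrow> bool" where
  "index_family le F \<longleftrightarrow>
     (\<forall>i. le i i) \<and> (\<forall>i j k. le i j \<longrightarrow> le j k \<longrightarrow> le i k) \<and>
     (\<forall>i j. \<exists>k. le i k \<and> le j k) \<and>
     (\<forall>S\<in>F. \<forall>i. \<exists>j\<in>S. le i j) \<and>
     (\<forall>S T. S \<in> F \<longrightarrow> S \<subseteq> T \<longrightarrow> T \<in> F) \<and>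
     (\<forall>S T. S \<in> F \<longrightarrow> T \<in> F \<longrightarrow> S \<inter> T \<in> F) \<and>
     (\<forall>S. S \<noteq> {} \<longrightarrow> upclosed le S \<longrightarrow> S \<in> F)"

definition sys :: "('j \<Rightarrow> 'j \<Rightarrow> bool) \<Rightarrow> ('j \<Rightarrow> 'x set) \<Rightarrow> ('x \<Rightarrow> 'x \<Rightarrow> bool) \<Rightarrow> bool" where
  "sys le Ms tr \<longleftrightarrow>
     (\<forall>i j. i \<noteq> j \<longrightarrow> Ms i \<inter> Ms j = {}) \<and>
     (\<forall>x y. tr x y \<longrightarrow> (\<exists>i i'. le i i' \<and> x \<in> Ms i' \<and> y \<in> Ms i)) \<and>
     (\<forall>i. \<forall>x\<in>Ms i. tr x x)"

definition eqv :: "('j \<Rightarrow> 'j \<Rightarrow> bool) \<Rightarrow> ('j \<Rightarrow> 'x set) \<Rightarrow> ('x \<Rightarrow> 'x \<Rightarrow> bool) \<Rightarrow> 'x \<Rightarrow> 'x \<Rightarrow> bool" where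
  "eqv le Ms tr x y \<longleftrightarrow>
     (\<exists>i j k c. x \<in> Ms i \<and> y \<in> Ms j \<and> le i k \<and> le j k \<and> c \<in> Ms k \<and> tr c x \<and> tr c y)"

definition prefactor :: "('j \<Rightarrow> 'j \<Rightarrow> bool) \<Rightarrow> ('j \<Rightarrow> 'x set) \<Rightarrow> ('x \<Rightarrow> 'x \<Rightarrow> bool) \<Rightarrow> bool" where
  "prefactor le Ms tr \<longleftrightarrow> sys le Ms tr \<and>
     (\<forall>i i' x y. le i i' \<longrightarrow> x \<in> Ms i' \<longrightarrow> y \<in> Ms i \<longrightarrow> (eqv le Ms tr x y \<longleftrightarrow> tr x y))"

definition stable :: "('j \<Rightarrow> 'j \<Rightarrow> bool) \<Rightarrow> ('j \<Rightarrow> 'x set) \<Rightarrow> ('x \<Rightarrow> 'x \<Rightarrow> bool) \<Rightarrow> bool" where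
  "stable le Ms tr \<longleftrightarrow>
     (\<forall>i i' x y z. le i i' \<longrightarrow> x \<in> Ms i' \<longrightarrow> y \<in> Ms i \<longrightarrow> z \<in> Ms i \<longrightarrow>
        tr x y \<longrightarrow> eqv le Ms tr y z \<longrightarrow> tr x z)"

definition emb_sys :: "('j \<Rightarrow> 'j \<Rightarrow> bool) \<Rightarrow> ('j \<Rightarrow> 'x set) \<Rightarrow> ('x \<Rightarrow> 'x \<Rightarrow> bool)
    \<Rightarrow> ('j \<Rightarrow> 'j \<Rightarrow> 'x \<Rightarrow> 'x) \<Rightarrow> bool" where
  "emb_sys le Ms tr emb \<longleftrightarrow>
     (\<forall>i i'. le i i' \<longrightarrow> (\<forall>a\<in>Ms i. emb i i' a \<in> Ms i') \<and>
        (\<forall>a\<in>Ms i. \<forall>b\<in>Ms i. eqv le Ms tr a b \<longrightarrow> eqv le Ms tr (emb i i' a) (emb i i' b))) \<and>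
     (\<forall>i. \<forall>a\<in>Ms i. eqv le Ms tr (emb i i a) a) \<and>
     (\<forall>i i' i''. le i i' \<longrightarrow> le i' i'' \<longrightarrow>
        (\<forall>a\<in>Ms i. eqv le Ms tr (emb i' i'' (emb i i' a)) (emb i i'' a)))"

definition coherent_emb :: "('j \<Rightarrow> 'j \<Rightarrow> bool) \<Rightarrow> ('j \<Rightarrow> 'x set) \<Rightarrow> ('x \<Rightarrow> 'x \<Rightarrow> bool)
    \<Rightarrow> ('j \<Rightarrow> 'j \<Rightarrow> 'x \<Rightarrow> 'x) \<Rightarrow> bool" where
  "coherent_emb le Ms tr emb \<longleftrightarrow>
     (\<forall>i i' i'' a b. le i i' \<longrightarrow> le i' i'' \<longrightarrow> a \<in> Ms i' \<longrightarrow> b \<in> Ms i \<longrightarrow>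
        tr a b \<longrightarrow> tr (emb i' i'' a) b)"

definition direct :: "('j \<Rightarrow> 'j \<Rightarrow> bool) \<Rightarrow> ('j \<Rightarrow> 'x set) \<Rightarrow> ('x \<Rightarrow> 'x \<Rightarrow> bool)
    \<Rightarrow> ('j \<Rightarrow> 'j \<Rightarrow> 'x \<Rightarrow> 'x) \<Rightarrow> bool" where
  "direct le Ms tr emb \<longleftrightarrow> prefactor le Ms tr \<and> emb_sys le Ms tr emb \<and> coherent_emb le Ms tr emb \<and>
     (\<forall>i i' a b. le i i' \<longrightarrow> a \<in> Ms i' \<longrightarrow> b \<in> Ms i \<longrightarrow>
        (tr a b \<longleftrightarrow> eqv le Ms tr a (emb i i' b)))"

definition proj_sys :: "('j \<Rightarrow> 'j \<Rightarrow> bool) \<Rightarrow> ('j \<Rightarrow> 'x set) \<Rightarrow> ('x \<Rightarrow> 'x \<Rightarrow> bool)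
    \<Rightarrow> ('j \<Rightarrow> 'j \<Rightarrow> 'x \<Rightarrow> 'x) \<Rightarrow> bool" where
  "proj_sys le Ms tr proj \<longleftrightarrow>
     (\<forall>i i'. le i i' \<longrightarrow> (\<forall>a\<in>Ms i'. proj i' i a \<in> Ms i) \<and>
        (\<forall>a\<in>Ms i'. \<forall>b\<in>Ms i'. eqv le Ms tr a b \<longrightarrow> eqv le Ms tr (proj i' i a) (proj i' i b))) \<and>
     (\<forall>i. \<forall>a\<in>Ms i. eqv le Ms tr (proj i i a) a) \<and>
     (\<forall>i i' i''. le i i' \<longrightarrow> le i' i'' \<longrightarrow>
        (\<forall>a\<in>Ms i''. eqv le Ms tr (proj i' i (proj i'' i' a)) (proj i'' i a)))"

definition coherent_proj :: "('j \<Rightarrow> 'j \<Rightarrow> bool) \<Rightarrow> ('j \<Rightarrow> 'x set) \<Rightarrow> ('x \<Rightarrow> 'x \<Rightarrow> bool)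
    \<Rightarrow> ('j \<Rightarrow> 'j \<Rightarrow> 'x \<Rightarrow> 'x) \<Rightarrow> bool" where
  "coherent_proj le Ms tr proj \<longleftrightarrow>
     (\<forall>i i' i'' a b. le i i' \<longrightarrow> le i' i'' \<longrightarrow> a \<in> Ms i'' \<longrightarrow> b \<in> Ms i \<longrightarrow>
        tr a b \<longrightarrow> tr (proj i'' i' a) b)"

definition inverse :: "('j \<Rightarrow> 'j \<Rightarrow> bool) \<Rightarrow> ('j \<Rightarrow> 'x set) \<Rightarrow> ('x \<Rightarrow> 'x \<Rightarrow> bool)
    \<Rightarrow> ('j \<Rightarrow> 'j \<Rightarrow> 'x \<Rightarrow> 'x) \<Rightarrow> bool" where
  "inverse le Ms tr proj \<longleftrightarrow> prefactor le Ms tr \<and> proj_sys le Ms tr proj \<and> coherent_proj le Ms tr proj \<and>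
     (\<forall>i i' a b. le i i' \<longrightarrow> a \<in> Ms i' \<longrightarrow> b \<in> Ms i \<longrightarrow>
        (tr a b \<longleftrightarrow> eqv le Ms tr (proj i' i a) b))"

section \<open>Compactification: index set I + {Top}, elements Inl (old) / Inr (target)\<close>

datatype 'i cpt = Idx 'i | Top

fun le_bar :: "('i \<Rightarrow> 'i \<Rightarrow> bool) \<Rightarrow> 'i cpt \<Rightarrow> 'i cpt \<Rightarrow> bool" where
  "le_bar le (Idx i) (Idx j) = le i j"
| "le_bar le _ Top = True"
| "le_bar le Top (Idx _) = False"

fun Ms_bar :: "('i \<Rightarrow> 'a set) \<Rightarrow> 'b set \<Rightarrow> 'i cpt \<Rightarrow> ('a + 'b) set" where
  "Ms_bar Ms Mt (Idx i) = Inl ` Ms i"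
| "Ms_bar Ms Mt Top = Inr ` Mt"

fun tr_bar :: "('a \<Rightarrow> 'a \<Rightarrow> bool) \<Rightarrow> ('b \<Rightarrow> 'a \<Rightarrow> bool) \<Rightarrow> 'a + 'b \<Rightarrow> 'a + 'b \<Rightarrow> bool" where
  "tr_bar tr ttr (Inl x) (Inl y) = tr x y"
| "tr_bar tr ttr (Inr a) (Inl y) = ttr a y"
| "tr_bar tr ttr (Inr a) (Inr b) = (a = b)"
| "tr_bar tr ttr (Inl x) (Inr b) = False"

text \<open>Extension of the embeddings by Emb i = emb_{i,top}; irrelevant arguments are mapped to themselves.\<close>
fun emb_bar :: "('i \<Rightarrow> 'i \<Rightarrow> 'a \<Rightarrow> 'a) \<Rightarrow> ('i \<Rightarrow> 'a \<Rightarrow> 'b) \<Rightarrow> 'i cpt \<Rightarrow> 'i cpt \<Rightarrow> 'a + 'b \<Rightarrow> 'a + 'b" where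
  "emb_bar emb Emb (Idx i) (Idx i') (Inl a) = Inl (emb i i' a)"
| "emb_bar emb Emb (Idx i) Top (Inl a) = Inr (Emb i a)"
| "emb_bar emb Emb _ _ x = x"

text \<open>Extension of the projections by Proj i = proj_{top,i}.\<close>
fun proj_bar :: "('i \<Rightarrow> 'i \<Rightarrow> 'a \<Rightarrow> 'a) \<Rightarrow> ('i \<Rightarrow> 'b \<Rightarrow> 'a) \<Rightarrow> 'i cpt \<Rightarrow> 'i cpt \<Rightarrow> 'a + 'b \<Rightarrow> 'a + 'b" where
  "proj_bar proj Proj (Idx i') (Idx i) (Inl a) = Inl (proj i' i a)"
| "proj_bar proj Proj Top (Idx i) (Inr a) = Inl (Proj i a)"
| "proj_bar proj Proj _ _ x = x"

definition Ia :: "('i \<Rightarrow> 'a set) \<Rightarrow> ('b \<Rightarrow> 'a \<Rightarrow> bool) \<Rightarrow> 'b \<Rightarrow> 'i set" where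
  "Ia Ms ttr a = {i. \<exists>x\<in>Ms i. ttr a x}"

definition target :: "('i \<Rightarrow> 'i \<Rightarrow> bool) \<Rightarrow> 'i set set \<Rightarrow> ('i \<Rightarrow> 'a set) \<Rightarrow> ('a \<Rightarrow> 'a \<Rightarrow> bool)
    \<Rightarrow> 'b set \<Rightarrow> ('b \<Rightarrow> 'a \<Rightarrow> bool) \<Rightarrow> bool" where
  "target le F Ms tr Mt ttr \<longleftrightarrow>
     (\<forall>a x. ttr a x \<longrightarrow> a \<in> Mt \<and> (\<exists>i. x \<in> Ms i)) \<and>
     (\<forall>a\<in>Mt. Ia Ms ttr a \<in> F) \<and>
     prefactor (le_bar le) (Ms_bar Ms Mt) (tr_bar tr ttr)"

definition consistent :: "('i \<Rightarrow> 'i \<Rightarrow> bool) \<Rightarrow> 'i set set \<Rightarrow> ('i \<Rightarrow> 'a set) \<Rightarrow> ('a \<Rightarrow> 'a \<Rightarrow> bool)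
    \<Rightarrow> 'a set \<Rightarrow> bool" where
  "consistent le F Ms tr \<alpha> \<longleftrightarrow>
     \<alpha> \<subseteq> (\<Union>i. Ms i) \<and>
     (\<forall>i i'. le i i' \<longrightarrow> (\<forall>x\<in>\<alpha> \<inter> Ms i'. \<forall>y\<in>\<alpha> \<inter> Ms i. tr x y)) \<and>
     {i. \<alpha> \<inter> Ms i \<noteq> {}} \<in> F"

definition Ext :: "('b \<Rightarrow> 'a \<Rightarrow> bool) \<Rightarrow> 'b \<Rightarrow> 'a set" where
  "Ext ttr a = {x. ttr a x}"

definition sim :: "('i \<Rightarrow> 'i \<Rightarrow> bool) \<Rightarrow> ('i \<Rightarrow> 'a set) \<Rightarrow> ('a \<Rightarrow> 'a \<Rightarrow> bool) \<Rightarrow> 'a set \<Rightarrow> 'a set \<Rightarrow> bool" where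
  "sim le Ms tr \<alpha> \<beta> \<longleftrightarrow> (\<forall>x\<in>\<alpha>. \<forall>y\<in>\<beta>. eqv le Ms tr x y)"

definition maximal :: "('i \<Rightarrow> 'i \<Rightarrow> bool) \<Rightarrow> 'i set set \<Rightarrow> ('i \<Rightarrow> 'a set) \<Rightarrow> ('a \<Rightarrow> 'a \<Rightarrow> bool)
    \<Rightarrow> 'b set \<Rightarrow> ('b \<Rightarrow> 'a \<Rightarrow> bool) \<Rightarrow> bool" where
  "maximal le F Ms tr Mt ttr \<longleftrightarrow>
     (\<forall>a\<in>Mt. consistent le F Ms tr (Ext ttr a) \<and>
        (\<forall>\<beta>. consistent le F Ms tr \<beta> \<longrightarrow> Ext ttr a \<subseteq> \<beta> \<longrightarrow> \<beta> = Ext ttr a))"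

definition extensional :: "('i \<Rightarrow> 'i \<Rightarrow> bool) \<Rightarrow> ('i \<Rightarrow> 'a set) \<Rightarrow> ('a \<Rightarrow> 'a \<Rightarrow> bool)
    \<Rightarrow> 'b set \<Rightarrow> ('b \<Rightarrow> 'a \<Rightarrow> bool) \<Rightarrow> bool" where
  "extensional le Ms tr Mt ttr \<longleftrightarrow>
     (\<forall>a\<in>Mt. \<forall>b\<in>Mt. sim le Ms tr (Ext ttr a) (Ext ttr b) \<longrightarrow> a = b)"

end

theory Submission
  imports Defs
begin

(* Every new instance of the defining properties in the compactification involves an element a
   of the target, and reduces to a statement about Ext a. Two elements below a are compared
   through a common element of Ext a at a higher level, which exists since I_a is cofinal.
   Maximality makes Ext a closed under the level-wise equivalence (stability at Top) and, in an
   inverse system, under projection to lower levels, so Ext a meets every level (inverseness at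
   Top, and I_a = I). In a direct system, extensionality forces a = Emb_i b for every b in Ext a
   at level i, so Ext a contains the embeddings emb_{i,j} b for all j >= i (directness at Top,
   and I_a contains the up-set of i). *)

lemma index_family_reflp: "index_family le F \<Longrightarrow> reflp le"
  unfolding index_family_def by (simp add: reflpI)

lemma index_family_transp: "index_family le F \<Longrightarrow> transp le"
  unfolding index_family_def transp_def by (elim conjE) blast

lemma index_family_upper_bound: "index_family le F \<Longrightarrow> \<exists>k. le i k \<and> le j k"
  unfolding index_family_def by (elim conjE) blast

lemma index_family_cofinal: "index_family le F \<Longrightarrow> S \<in> F \<Longrightarrow> \<exists>j\<in>S. le i j"
  unfolding index_family_def by (elim conjE) blast

lemma index_family_superset: "index_family le F \<Longrightarrow> S \<in> F \<Longrightarrow> S \<subseteq> T \<Longrightarrow> T \<in> F"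
  unfolding index_family_def by (elim conjE) blast

lemma eqvI:
  "x \<in> Ms i \<Longrightarrow> y \<in> Ms j \<Longrightarrow> le i k \<Longrightarrow> le j k \<Longrightarrow> c \<in> Ms k \<Longrightarrow> tr c x \<Longrightarrow> tr c y
    \<Longrightarrow> eqv le Ms tr x y"
  unfolding eqv_def by blast

lemma eqv_sym: "eqv le Ms tr x y \<Longrightarrow> eqv le Ms tr y x"
  unfolding eqv_def by blast

lemma prefactor_refl: "prefactor le Ms tr \<Longrightarrow> x \<in> Ms i \<Longrightarrow> tr x x"
  unfolding prefactor_def sys_def by blast

lemma prefactor_tr_iff_eqv:
  "prefactor le Ms tr \<Longrightarrow> le i i' \<Longrightarrow> x \<in> Ms i' \<Longrightarrow> y \<in> Ms i \<Longrightarrow> tr x y \<longleftrightarrow> eqv le Ms tr x y"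
  unfolding prefactor_def by blast

lemma prefactor_eqv_refl: "prefactor le Ms tr \<Longrightarrow> le i i \<Longrightarrow> x \<in> Ms i \<Longrightarrow> eqv le Ms tr x x"
  using prefactor_tr_iff_eqv prefactor_refl by metis

lemma prefactor_eqv_trans:
  assumes P: "prefactor le Ms tr" and "le i i" "x \<in> Ms i" "y \<in> Ms i" "z \<in> Ms i"
    and "eqv le Ms tr x y" "eqv le Ms tr y z"
  shows "eqv le Ms tr x z"
proof -
  have "tr y x" using assms prefactor_tr_iff_eqv[OF P] eqv_sym by metis
  moreover have "tr y z" using assms prefactor_tr_iff_eqv[OF P] by metis
  ultimately show ?thesis using assms by (intro eqvI[where c=y])
qed

lemma stableD:
  "stable le Ms tr \<Longrightarrow> le i i' \<Longrightarrow> x \<in> Ms i' \<Longrightarrow> y \<in> Ms i \<Longrightarrow> z \<in> Ms i \<Longrightarrow>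
    tr x y \<Longrightarrow> eqv le Ms tr y z \<Longrightarrow> tr x z"
  unfolding stable_def by blast

lemma emb_sys_mem: "emb_sys le Ms tr emb \<Longrightarrow> le i i' \<Longrightarrow> a \<in> Ms i \<Longrightarrow> emb i i' a \<in> Ms i'"
  unfolding emb_sys_def by blast

lemma emb_sys_eqv:
  "emb_sys le Ms tr emb \<Longrightarrow> le i i' \<Longrightarrow> a \<in> Ms i \<Longrightarrow> b \<in> Ms i \<Longrightarrow> eqv le Ms tr a b
    \<Longrightarrow> eqv le Ms tr (emb i i' a) (emb i i' b)"
  unfolding emb_sys_def by blast

lemma emb_sys_comp:
  "emb_sys le Ms tr emb \<Longrightarrow> le i i' \<Longrightarrow> le i' i'' \<Longrightarrow> a \<in> Ms i
    \<Longrightarrow> eqv le Ms tr (emb i' i'' (emb i i' a)) (emb i i'' a)"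
  unfolding emb_sys_def by blast

lemma coherent_embD:
  "coherent_emb le Ms tr emb \<Longrightarrow> le i i' \<Longrightarrow> le i' i'' \<Longrightarrow> a \<in> Ms i' \<Longrightarrow> b \<in> Ms i
    \<Longrightarrow> tr a b \<Longrightarrow> tr (emb i' i'' a) b"
  unfolding coherent_emb_def by blast

lemma direct_tr_iff:
  "direct le Ms tr emb \<Longrightarrow> le i i' \<Longrightarrow> a \<in> Ms i' \<Longrightarrow> b \<in> Ms i
    \<Longrightarrow> tr a b \<longleftrightarrow> eqv le Ms tr a (emb i i' b)"
  unfolding direct_def by blast

lemma direct_emb_sys: "direct le Ms tr emb \<Longrightarrow> emb_sys le Ms tr emb"
  unfolding direct_def by blast

lemma proj_sys_mem: "proj_sys le Ms tr proj \<Longrightarrow> le i i' \<Longrightarrow> a \<in> Ms i' \<Longrightarrow> proj i' i a \<in> Ms i"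
  unfolding proj_sys_def by blast

lemma proj_sys_eqv:
  "proj_sys le Ms tr proj \<Longrightarrow> le i i' \<Longrightarrow> a \<in> Ms i' \<Longrightarrow> b \<in> Ms i' \<Longrightarrow> eqv le Ms tr a b
    \<Longrightarrow> eqv le Ms tr (proj i' i a) (proj i' i b)"
  unfolding proj_sys_def by blast

lemma proj_sys_comp:
  "proj_sys le Ms tr proj \<Longrightarrow> le i i' \<Longrightarrow> le i' i'' \<Longrightarrow> a \<in> Ms i''
    \<Longrightarrow> eqv le Ms tr (proj i' i (proj i'' i' a)) (proj i'' i a)"
  unfolding proj_sys_def by blast

lemma coherent_projD:
  "coherent_proj le Ms tr proj \<Longrightarrow> le i i' \<Longrightarrow> le i' i'' \<Longrightarrow> a \<in> Ms i'' \<Longrightarrow> b \<in> Ms i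
    \<Longrightarrow> tr a b \<Longrightarrow> tr (proj i'' i' a) b"
  unfolding coherent_proj_def by blast

lemma inverse_tr_iff:
  "inverse le Ms tr proj \<Longrightarrow> le i i' \<Longrightarrow> a \<in> Ms i' \<Longrightarrow> b \<in> Ms i
    \<Longrightarrow> tr a b \<longleftrightarrow> eqv le Ms tr (proj i' i a) b"
  unfolding Defs.inverse_def by blast

lemma inverse_prefactor: "inverse le Ms tr proj \<Longrightarrow> prefactor le Ms tr"
  unfolding Defs.inverse_def by blast

lemma inverse_proj_sys: "inverse le Ms tr proj \<Longrightarrow> proj_sys le Ms tr proj"
  unfolding Defs.inverse_def by blast

lemma inverse_stable:
  assumes I: "inverse le Ms tr proj" and "reflp le"
  shows "stable le Ms tr"
  unfolding stable_def
proof (intro allI impI)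
  fix i i' x y z
  assume h: "le i i'" "x \<in> Ms i'" "y \<in> Ms i" "z \<in> Ms i" "tr x y" "eqv le Ms tr y z"
  have "le i i" using \<open>reflp le\<close> by (rule reflpD)
  moreover have "proj i' i x \<in> Ms i" using proj_sys_mem[OF inverse_proj_sys[OF I] h(1,2)] .
  moreover have "eqv le Ms tr (proj i' i x) y" using inverse_tr_iff[OF I] h by blast
  ultimately have "eqv le Ms tr (proj i' i x) z"
    using prefactor_eqv_trans[OF inverse_prefactor[OF I]] h by blast
  then show "tr x z" using inverse_tr_iff[OF I] h by blast
qed

text \<open>Along a chain of levels, both relations are read off at the lowest level, where
  \<open>proj m i u \<approx> proj j i (proj m j u) \<approx> proj j i w \<approx> z\<close>.\<close>
lemma inverse_tr_trans:
  assumes I: "inverse le Ms tr proj" and "reflp le" "transp le"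
    and ij: "le i j" and jm: "le j m" and u: "u \<in> Ms m" and w: "w \<in> Ms j" and z: "z \<in> Ms i"
    and uw: "tr u w" and wz: "tr w z"
  shows "tr u z"
proof -
  have P: "prefactor le Ms tr" and PS: "proj_sys le Ms tr proj"
    using inverse_prefactor[OF I] inverse_proj_sys[OF I] .
  have ii: "le i i" and im: "le i m" using assms by (auto dest: reflpD transpD)
  let ?u = "proj m i u" and ?uw = "proj j i (proj m j u)" and ?w = "proj j i w"
  have mem: "?u \<in> Ms i" "?uw \<in> Ms i" "?w \<in> Ms i" "proj m j u \<in> Ms j"
    using proj_sys_mem[OF PS] assms im by blast+
  have "eqv le Ms tr ?u ?uw" using proj_sys_comp[OF PS ij jm u] by (rule eqv_sym)
  moreover have "eqv le Ms tr ?uw ?w"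
    using proj_sys_eqv[OF PS ij mem(4) w] inverse_tr_iff[OF I jm u w] uw by blast
  moreover have "eqv le Ms tr ?w z" using inverse_tr_iff[OF I ij w z] wz by blast
  ultimately have "eqv le Ms tr ?u z"
    using prefactor_eqv_trans[OF P ii] mem z by meson
  then show ?thesis using inverse_tr_iff[OF I im u z] by blast
qed

lemma le_bar_pair_cases:
  assumes "le_bar le i i'" "x \<in> Ms_bar Ms Mt i'" "y \<in> Ms_bar Ms Mt i"
  obtains (Idx) i0 i0' x0 y0 where "i = Idx i0" "i' = Idx i0'" "le i0 i0'"
      "x = Inl x0" "y = Inl y0" "x0 \<in> Ms i0'" "y0 \<in> Ms i0"
  | (Idx_Top) i0 a y0 where "i = Idx i0" "i' = Top" "x = Inr a" "y = Inl y0" "a \<in> Mt" "y0 \<in> Ms i0"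
  | (Top) a b where "i = Top" "i' = Top" "x = Inr a" "y = Inr b" "a \<in> Mt" "b \<in> Mt"
  using assms by (cases i; cases i') auto

lemma eqv_bar_InrD:
  assumes "eqv (le_bar le) (Ms_bar Ms Mt) (tr_bar tr ttr) (Inr a) (Inr b)"
  shows "a = b"
proof -
  from assms obtain c where "tr_bar tr ttr c (Inr a)" "tr_bar tr ttr c (Inr b)"
    unfolding eqv_def by blast
  then show "a = b" by (cases c) auto
qed

lemma eqv_bar_Inr_iff:
  assumes "a \<in> Mt"
  shows "eqv (le_bar le) (Ms_bar Ms Mt) (tr_bar tr ttr) (Inr a) (Inr b) \<longleftrightarrow> a = b"
  using assms eqv_bar_InrD by (auto intro: eqvI[where i=Top and j=Top and k=Top and c="Inr a"])

lemma eqv_bar_InlI: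
  assumes "eqv le Ms tr y z"
  shows "eqv (le_bar le) (Ms_bar Ms Mt) (tr_bar tr ttr) (Inl y) (Inl z)"
proof -
  from assms obtain i j k c where "y \<in> Ms i" "z \<in> Ms j" "le i k" "le j k" "c \<in> Ms k" "tr c y" "tr c z"
    unfolding eqv_def by blast
  then show ?thesis
    by (intro eqvI[where i="Idx i" and j="Idx j" and k="Idx k" and c="Inl c"]) auto
qed

locale prefactor_target =
  fixes le :: "'i \<Rightarrow> 'i \<Rightarrow> bool" and F :: "'i set set"
    and Ms :: "'i \<Rightarrow> 'a set" and tr :: "'a \<Rightarrow> 'a \<Rightarrow> bool"
    and Mt :: "'b set" and ttr :: "'b \<Rightarrow> 'a \<Rightarrow> bool"
  assumes index_family: "index_family le F"
    and prefactor: "prefactor le Ms tr"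
    and target: "target le F Ms tr Mt ttr"
begin

abbreviation "le_c \<equiv> le_bar le"
abbreviation "Ms_c \<equiv> Ms_bar Ms Mt"
abbreviation "tr_c \<equiv> tr_bar tr ttr"

lemma reflp_le: "reflp le"
  using index_family by (rule index_family_reflp)

lemma transp_le: "transp le"
  using index_family by (rule index_family_transp)

lemma le_refl: "le i i"
  using reflp_le by (rule reflpD)

lemma le_trans: "le i j \<Longrightarrow> le j k \<Longrightarrow> le i k"
  using transp_le by (rule transpD)

lemma prefactor_c: "prefactor le_c Ms_c tr_c"
  using target unfolding target_def by blast

lemma ttr_dom: "ttr a x \<Longrightarrow> a \<in> Mt \<and> (\<exists>i. x \<in> Ms i)"
  using target unfolding target_def by blast

lemma Ia_in_F: "a \<in> Mt \<Longrightarrow> Ia Ms ttr a \<in> F"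
  using target unfolding target_def by blast

text \<open>\<open>Inl u\<close> and \<open>Inl y\<close> have the common upper bound \<open>Inr a\<close> at \<open>Top\<close>.\<close>
lemma Ext_tr:
  assumes "ttr a u" "ttr a y" "u \<in> Ms m" "y \<in> Ms l" "le l m"
  shows "tr u y"
proof -
  have "a \<in> Mt" using ttr_dom assms(1) by blast
  with assms have "eqv le_c Ms_c tr_c (Inl u) (Inl y)"
    by (intro eqvI[where i="Idx m" and j="Idx l" and k=Top and c="Inr a"]) auto
  then show ?thesis
    using prefactor_tr_iff_eqv[OF prefactor_c, of "Idx l" "Idx m" "Inl u" "Inl y"] assms by simp
qed

lemma Ext_above:
  assumes "a \<in> Mt"
  obtains j u where "le i j" "le i' j" "u \<in> Ms j" "ttr a u"
proof -
  obtain k where k: "le i k" "le i' k" using index_family_upper_bound[OF index_family] by blast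
  obtain j where "j \<in> Ia Ms ttr a" "le k j"
    using index_family_cofinal[OF index_family Ia_in_F[OF assms]] by blast
  with k show thesis using that le_trans unfolding Ia_def by blast
qed

lemma eqv_bar_Inl_iff: "eqv le_c Ms_c tr_c (Inl y) (Inl z) \<longleftrightarrow> eqv le Ms tr y z"
proof
  assume "eqv le_c Ms_c tr_c (Inl y) (Inl z)"
  then obtain i j k c where h: "Inl y \<in> Ms_c i" "Inl z \<in> Ms_c j" "le_c i k" "le_c j k"
      "c \<in> Ms_c k" "tr_c c (Inl y)" "tr_c c (Inl z)"
    unfolding eqv_def by blast
  obtain i0 j0 where ij: "i = Idx i0" "j = Idx j0" "y \<in> Ms i0" "z \<in> Ms j0"
    using h(1,2) by (cases i; cases j) auto
  show "eqv le Ms tr y z"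
  proof (cases k)
    case (Idx k0)
    then obtain c0 where "c = Inl c0" "c0 \<in> Ms k0" using h(5) by auto
    with h ij Idx show ?thesis by (intro eqvI[where i=i0 and j=j0 and k=k0 and c=c0]) auto
  next
    case Top
    then obtain a where a: "c = Inr a" "a \<in> Mt" using h(5) by auto
    obtain m u where u: "le i0 m" "le j0 m" "u \<in> Ms m" "ttr a u"
      using Ext_above[OF a(2)] by blast
    have "tr u y" "tr u z" using Ext_tr[OF u(4) _ u(3)] h(6,7) a(1) ij u(1,2) by auto
    with u ij show ?thesis by (intro eqvI[where i=i0 and j=j0 and k=m and c=u])
  qed
qed (rule eqv_bar_InlI)

end

locale maximal_target = prefactor_target +
  assumes maximal: "maximal le F Ms tr Mt ttr"
begin

text \<open>Inserting \<open>z\<close> into \<open>Ext a\<close> keeps it consistent, so by maximality \<open>z\<close> was already there.\<close>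
lemma Ext_insert:
  assumes a: "a \<in> Mt" and z: "z \<in> Ms i"
    and below: "\<And>m u. le i m \<Longrightarrow> u \<in> Ms m \<Longrightarrow> ttr a u \<Longrightarrow> tr u z"
  shows "ttr a z"
proof -
  have cons: "consistent le F Ms tr (Ext ttr a)"
    and max: "\<And>\<beta>. consistent le F Ms tr \<beta> \<Longrightarrow> Ext ttr a \<subseteq> \<beta> \<Longrightarrow> \<beta> = Ext ttr a"
    using maximal a unfolding maximal_def by blast+
  define \<beta> where "\<beta> = insert z (Ext ttr a)"
  have tr_\<beta>: "tr x y" if "le l l'" "x \<in> \<beta>" "x \<in> Ms l'" "y \<in> \<beta>" "y \<in> Ms l" for l l' x y
  proof -
    obtain m u where u: "le i m" "le l' m" "u \<in> Ms m" "ttr a u"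
      using Ext_above[OF a] by blast
    have u_\<beta>: "tr u v" if "v \<in> \<beta>" "v \<in> Ms k" "le k m" for v k
      using that below[OF u(1,3,4)] Ext_tr[OF u(4) _ u(3)] unfolding \<beta>_def Ext_def by blast
    have "tr u x" "tr u y" using u_\<beta> that u(2) le_trans by blast+
    with that u le_trans have "eqv le Ms tr x y" by (intro eqvI[where k=m and c=u]) blast+
    with that show ?thesis using prefactor_tr_iff_eqv[OF prefactor] by blast
  qed
  have "{i. Ext ttr a \<inter> Ms i \<noteq> {}} \<in> F" using cons unfolding consistent_def by blast
  moreover have "{i. Ext ttr a \<inter> Ms i \<noteq> {}} \<subseteq> {i. \<beta> \<inter> Ms i \<noteq> {}}"
    unfolding \<beta>_def by blast
  ultimately have "{i. \<beta> \<inter> Ms i \<noteq> {}} \<in> F" by (rule index_family_superset[OF index_family])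
  moreover have "\<beta> \<subseteq> (\<Union>i. Ms i)" using cons z unfolding consistent_def \<beta>_def by blast
  ultimately have "consistent le F Ms tr \<beta>" using tr_\<beta> unfolding consistent_def by blast
  then have "\<beta> = Ext ttr a" by (rule max) (auto simp: \<beta>_def)
  then show ?thesis unfolding \<beta>_def Ext_def by blast
qed

lemma Ext_eqv_closed:
  assumes "stable le Ms tr" "ttr a y" "y \<in> Ms i" "z \<in> Ms i" "eqv le Ms tr y z"
  shows "ttr a z"
proof (rule Ext_insert)
  show "a \<in> Mt" using ttr_dom assms(2) by blast
  fix m u assume u: "le i m" "u \<in> Ms m" "ttr a u"
  have "tr u y" using Ext_tr[OF u(3) assms(2) u(2) assms(3) u(1)] .
  then show "tr u z" by (rule stableD[OF assms(1) u(1,2) assms(3,4) _ assms(5)])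
qed (fact assms)

theorem stable_compactification:
  assumes S: "stable le Ms tr"
  shows "stable le_c Ms_c tr_c"
  unfolding stable_def
proof (intro allI impI)
  fix i i' x y z
  assume h: "le_c i i'" "x \<in> Ms_c i'" "y \<in> Ms_c i" "z \<in> Ms_c i" "tr_c x y" "eqv le_c Ms_c tr_c y z"
  from h(1-3) show "tr_c x z"
  proof (cases rule: le_bar_pair_cases)
    case (Idx i0 i0' x0 y0)
    with h(4) obtain z0 where z: "z = Inl z0" "z0 \<in> Ms i0" by auto
    have "eqv le Ms tr y0 z0" using h(6) Idx z by (simp add: eqv_bar_Inl_iff)
    moreover have "tr x0 y0" using h(5) Idx by simp
    ultimately show ?thesis using stableD[OF S Idx(3,6,7) z(2)] Idx z by simp
  next
    case (Idx_Top i0 a y0)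
    with h(4) obtain z0 where z: "z = Inl z0" "z0 \<in> Ms i0" by auto
    have "eqv le Ms tr y0 z0" using h(6) Idx_Top z by (simp add: eqv_bar_Inl_iff)
    moreover have "ttr a y0" using h(5) Idx_Top by simp
    ultimately show ?thesis using Ext_eqv_closed[OF S _ Idx_Top(6) z(2)] Idx_Top z by simp
  next
    case (Top a b)
    with h(4) obtain c where z: "z = Inr c" by auto
    have "b = c" using h(6) Top z eqv_bar_Inr_iff by metis
    then show ?thesis using h(5) Top z by simp
  qed
qed

end
locale extensional_direct_target = prefactor_target +
  fixes emb and Emb
  assumes direct: "direct le Ms tr emb"
    and emb_sys_c: "emb_sys le_c Ms_c tr_c (emb_bar emb Emb)"
    and coherent_emb_c: "coherent_emb le_c Ms_c tr_c (emb_bar emb Emb)"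
    and extensional: "extensional le Ms tr Mt ttr"
begin

lemma Emb_mem: "b \<in> Ms i \<Longrightarrow> Emb i b \<in> Mt"
  using emb_sys_mem[OF emb_sys_c, of "Idx i" Top "Inl b"] by auto

lemma Emb_emb: "le i m \<Longrightarrow> b \<in> Ms i \<Longrightarrow> Emb m (emb i m b) = Emb i b"
  using emb_sys_comp[OF emb_sys_c, of "Idx i" "Idx m" Top "Inl b"] by (auto dest: eqv_bar_InrD)

lemma Emb_eqv: "eqv le Ms tr u v \<Longrightarrow> u \<in> Ms m \<Longrightarrow> v \<in> Ms m \<Longrightarrow> Emb m u = Emb m v"
  using emb_sys_eqv[OF emb_sys_c, of "Idx m" Top "Inl u" "Inl v"]
  by (auto dest: eqv_bar_InrD intro: eqv_bar_InlI)

lemma Emb_tr: "b \<in> Ms i \<Longrightarrow> ttr (Emb i b) b"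
  using coherent_embD[OF coherent_emb_c, of "Idx i" "Idx i" Top "Inl b" "Inl b"]
    le_refl prefactor_refl[OF prefactor] by auto

lemma Emb_tr_Ext:
  assumes ab: "ttr a b" and b: "b \<in> Ms i" and im: "le i m" and u: "u \<in> Ms m" "ttr a u"
  shows "ttr (Emb i b) u"
proof -
  have "eqv le Ms tr u (emb i m b)"
    using direct_tr_iff[OF direct im u(1) b] Ext_tr[OF u(2) ab u(1) b im] by blast
  then have "Emb m u = Emb i b"
    using Emb_eqv[OF _ u(1) emb_sys_mem[OF direct_emb_sys[OF direct] im b]] Emb_emb[OF im b] by simp
  then show ?thesis using Emb_tr[OF u(1)] by simp
qed

lemma ttr_imp_eq_Emb:
  assumes ab: "ttr a b" and b: "b \<in> Ms i"
  shows "a = Emb i b"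
proof -
  have a: "a \<in> Mt" using ttr_dom ab by blast
  have "sim le Ms tr (Ext ttr a) (Ext ttr (Emb i b))"
    unfolding sim_def Ext_def
  proof (intro ballI, unfold mem_Collect_eq)
    fix x y assume x: "ttr a x" and y: "ttr (Emb i b) y"
    obtain j j' where j: "x \<in> Ms j" "y \<in> Ms j'" using ttr_dom x y by blast
    obtain k where k: "le j k" "le j' k" using index_family_upper_bound[OF index_family] by blast
    obtain m u where u: "le i m" "le k m" "u \<in> Ms m" "ttr a u" using Ext_above[OF a] by blast
    have jm: "le j m" "le j' m" using k u(2) le_trans by blast+
    have "tr u x" using Ext_tr[OF u(4) x u(3) j(1) jm(1)] .
    moreover have "tr u y" using Ext_tr[OF Emb_tr_Ext[OF ab b u(1,3,4)] y u(3) j(2) jm(2)] .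
    ultimately show "eqv le Ms tr x y" using j jm u(3) by (intro eqvI[where k=m and c=u])
  qed
  then show ?thesis using extensional a Emb_mem[OF b] unfolding extensional_def by blast
qed

lemma ttr_Emb_iff: "b \<in> Ms i \<Longrightarrow> ttr a b \<longleftrightarrow> a = Emb i b"
  using ttr_imp_eq_Emb Emb_tr by blast

theorem direct_compactification: "direct le_c Ms_c tr_c (emb_bar emb Emb)"
  unfolding direct_def
proof (intro conjI prefactor_c emb_sys_c coherent_emb_c allI impI)
  fix i i' x y assume "le_c i i'" "x \<in> Ms_c i'" "y \<in> Ms_c i"
  then show "tr_c x y \<longleftrightarrow> eqv le_c Ms_c tr_c x (emb_bar emb Emb i i' y)"
  proof (cases rule: le_bar_pair_cases)
    case (Idx i0 i0' x0 y0)
    then show ?thesis using direct_tr_iff[OF direct] by (simp add: eqv_bar_Inl_iff)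
  next
    case (Idx_Top i0 a y0)
    then show ?thesis by (simp add: ttr_Emb_iff eqv_bar_Inr_iff)
  next
    case (Top a b)
    then show ?thesis by (simp add: eqv_bar_Inr_iff)
  qed
qed

lemma Ia_contains_upset:
  assumes a: "a \<in> Mt"
  shows "\<exists>S. S \<noteq> {} \<and> upclosed le S \<and> S \<subseteq> Ia Ms ttr a"
proof -
  obtain i b where b: "b \<in> Ms i" "ttr a b"
    using index_family_cofinal[OF index_family Ia_in_F[OF a]] unfolding Ia_def by blast
  have "{j. le i j} \<subseteq> Ia Ms ttr a"
  proof
    fix j assume "j \<in> {j. le i j}"
    then have ij: "le i j" by simp
    have "emb i j b \<in> Ms j" using emb_sys_mem[OF direct_emb_sys[OF direct] ij b(1)] .
    moreover from this have "ttr a (emb i j b)"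
      using ttr_Emb_iff Emb_emb[OF ij b(1)] b by metis
    ultimately show "j \<in> Ia Ms ttr a" unfolding Ia_def by blast
  qed
  moreover have "upclosed le {j. le i j}" unfolding upclosed_def using le_trans by blast
  ultimately show ?thesis using le_refl by blast
qed

end

locale maximal_inverse_target = maximal_target +
  fixes proj and Proj
  assumes inverse: "inverse le Ms tr proj"
    and proj_sys_c: "proj_sys le_c Ms_c tr_c (proj_bar proj Proj)"
    and coherent_proj_c: "coherent_proj le_c Ms_c tr_c (proj_bar proj Proj)"
begin

lemma Proj_mem: "a \<in> Mt \<Longrightarrow> Proj i a \<in> Ms i"
  using proj_sys_mem[OF proj_sys_c, of "Idx i" Top "Inr a"] by auto

lemma Proj_tr: "ttr a b \<Longrightarrow> b \<in> Ms i \<Longrightarrow> tr (Proj i a) b"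
  using coherent_projD[OF coherent_proj_c, of "Idx i" "Idx i" Top "Inr a" "Inl b"] le_refl ttr_dom
  by auto

text \<open>The projection \<open>z\<close> to level \<open>i\<close> of an element of \<open>Ext a\<close> lies below every element of
  \<open>Ext a\<close> above level \<open>i\<close>, so maximality puts \<open>z\<close> into \<open>Ext a\<close>.\<close>
lemma Ext_meets_level:
  assumes a: "a \<in> Mt"
  obtains z where "z \<in> Ms i" "ttr a z"
proof -
  obtain j w where w: "le i j" "w \<in> Ms j" "ttr a w" using Ext_above[OF a] by blast
  define z where "z = proj j i w"
  have z: "z \<in> Ms i" unfolding z_def using proj_sys_mem[OF inverse_proj_sys[OF inverse] w(1,2)] .
  have wz: "tr w z"
    using inverse_tr_iff[OF inverse w(1,2) z] prefactor_eqv_refl[OF prefactor le_refl z]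
    unfolding z_def by blast
  have "ttr a z"
  proof (rule Ext_insert[OF a z])
    fix m u assume u: "le i m" "u \<in> Ms m" "ttr a u"
    obtain m' u' where u': "le m m'" "le j m'" "u' \<in> Ms m'" "ttr a u'" using Ext_above[OF a] by blast
    have "tr u' z"
      using inverse_tr_trans[OF inverse reflp_le transp_le w(1) u'(2,3) w(2) z
          Ext_tr[OF u'(4) w(3) u'(3) w(2) u'(2)] wz] .
    moreover have "tr u' u" using Ext_tr[OF u'(4) u(3) u'(3) u(2) u'(1)] .
    moreover have "le i m'" using le_trans u(1) u'(1) .
    ultimately have "eqv le Ms tr u z" using u(2) u'(1,3) z by (intro eqvI[where k=m' and c=u'])
    then show "tr u z" using prefactor_tr_iff_eqv[OF prefactor u(1,2) z] by blast
  qed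
  with z show thesis by (rule that)
qed

lemma Ia_eq_UNIV: "a \<in> Mt \<Longrightarrow> Ia Ms ttr a = UNIV"
  using Ext_meets_level unfolding Ia_def by blast

theorem inverse_compactification: "inverse le_c Ms_c tr_c (proj_bar proj Proj)"
  unfolding Defs.inverse_def
proof (intro conjI prefactor_c proj_sys_c coherent_proj_c allI impI)
  fix i i' x y assume "le_c i i'" "x \<in> Ms_c i'" "y \<in> Ms_c i"
  then show "tr_c x y \<longleftrightarrow> eqv le_c Ms_c tr_c (proj_bar proj Proj i' i x) y"
  proof (cases rule: le_bar_pair_cases)
    case (Idx i0 i0' x0 y0)
    then show ?thesis using inverse_tr_iff[OF inverse] by (simp add: eqv_bar_Inl_iff)
  next
    case (Idx_Top i0 a y0)
    have Pa: "Proj i0 a \<in> Ms i0" using Proj_mem[OF Idx_Top(5)] .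
    have "ttr a y0 \<longleftrightarrow> tr (Proj i0 a) y0"
    proof
      assume "ttr a y0"
      then show "tr (Proj i0 a) y0" using Proj_tr Idx_Top(6) by blast
    next
      assume Pa_y0: "tr (Proj i0 a) y0"
      obtain z where z: "z \<in> Ms i0" "ttr a z" using Ext_meets_level[OF Idx_Top(5)] .
      have "eqv le Ms tr z y0"
        using z(1) Idx_Top(6) le_refl Pa Proj_tr[OF z(2,1)] Pa_y0
        by (intro eqvI[where k=i0 and c="Proj i0 a"])
      then show "ttr a y0"
        by (rule Ext_eqv_closed[OF inverse_stable[OF inverse reflp_le] z(2,1) Idx_Top(6)])
    qed
    with Idx_Top Pa show ?thesis
      using prefactor_tr_iff_eqv[OF prefactor le_refl Pa] by (simp add: eqv_bar_Inl_iff)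
  next
    case (Top a b)
    then show ?thesis by (simp add: eqv_bar_Inr_iff)
  qed
qed

end

theorem proposition2p11:
  fixes le :: "'i \<Rightarrow> 'i \<Rightarrow> bool" and F :: "'i set set"
    and Ms :: "'i \<Rightarrow> 'a set" and tr :: "'a \<Rightarrow> 'a \<Rightarrow> bool"
    and Mt :: "'b set" and ttr :: "'b \<Rightarrow> 'a \<Rightarrow> bool"
    and emb :: "'i \<Rightarrow> 'i \<Rightarrow> 'a \<Rightarrow> 'a" and Emb :: "'i \<Rightarrow> 'a \<Rightarrow> 'b"
    and proj :: "'i \<Rightarrow> 'i \<Rightarrow> 'a \<Rightarrow> 'a" and Proj :: "'i \<Rightarrow> 'b \<Rightarrow> 'a"
  assumes "index_family le F"
    and "prefactor le Ms tr"
    and "target le F Ms tr Mt ttr"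
  shows
    "(stable le Ms tr \<and> maximal le F Ms tr Mt ttr
        \<longrightarrow> stable (le_bar le) (Ms_bar Ms Mt) (tr_bar tr ttr))
   \<and> (direct le Ms tr emb
        \<and> emb_sys (le_bar le) (Ms_bar Ms Mt) (tr_bar tr ttr) (emb_bar emb Emb)
        \<and> coherent_emb (le_bar le) (Ms_bar Ms Mt) (tr_bar tr ttr) (emb_bar emb Emb)
        \<and> extensional le Ms tr Mt ttr
        \<longrightarrow> direct (le_bar le) (Ms_bar Ms Mt) (tr_bar tr ttr) (emb_bar emb Emb)
            \<and> (\<forall>a\<in>Mt. \<exists>S. S \<noteq> {} \<and> upclosed le S \<and> S \<subseteq> Ia Ms ttr a))
   \<and> (inverse le Ms tr proj
        \<and> proj_sys (le_bar le) (Ms_bar Ms Mt) (tr_bar tr ttr) (proj_bar proj Proj)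
        \<and> coherent_proj (le_bar le) (Ms_bar Ms Mt) (tr_bar tr ttr) (proj_bar proj Proj)
        \<and> maximal le F Ms tr Mt ttr
        \<longrightarrow> inverse (le_bar le) (Ms_bar Ms Mt) (tr_bar tr ttr) (proj_bar proj Proj)
            \<and> (\<forall>a\<in>Mt. Ia Ms ttr a = UNIV))"
proof (intro conjI impI ballI; elim conjE)
  assume "stable le Ms tr" "maximal le F Ms tr Mt ttr"
  then interpret maximal_target le F Ms tr Mt ttr
    using assms by unfold_locales
  show "stable (le_bar le) (Ms_bar Ms Mt) (tr_bar tr ttr)"
    by (rule stable_compactification) fact
next
  assume "direct le Ms tr emb"
    "emb_sys (le_bar le) (Ms_bar Ms Mt) (tr_bar tr ttr) (emb_bar emb Emb)"
    "coherent_emb (le_bar le) (Ms_bar Ms Mt) (tr_bar tr ttr) (emb_bar emb Emb)"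
    "extensional le Ms tr Mt ttr"
  then interpret extensional_direct_target le F Ms tr Mt ttr emb Emb
    using assms by unfold_locales
  show "direct (le_bar le) (Ms_bar Ms Mt) (tr_bar tr ttr) (emb_bar emb Emb)"
    by (rule direct_compactification)
  show "\<exists>S. S \<noteq> {} \<and> upclosed le S \<and> S \<subseteq> Ia Ms ttr a" if "a \<in> Mt" for a
    using that by (rule Ia_contains_upset)
next
  assume "inverse le Ms tr proj"
    "proj_sys (le_bar le) (Ms_bar Ms Mt) (tr_bar tr ttr) (proj_bar proj Proj)"
    "coherent_proj (le_bar le) (Ms_bar Ms Mt) (tr_bar tr ttr) (proj_bar proj Proj)"
    "maximal le F Ms tr Mt ttr"
  then interpret maximal_inverse_target le F Ms tr Mt ttr proj Proj
    using assms by unfold_locales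
  show "inverse (le_bar le) (Ms_bar Ms Mt) (tr_bar tr ttr) (proj_bar proj Proj)"
    by (rule inverse_compactification)
  show "Ia Ms ttr a = UNIV" if "a \<in> Mt" for a
    using that by (rule Ia_eq_UNIV)
qed

end
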